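(* Every $y=(y^1,y^2,y^3)\in\mathbb T^3$ such that $y^i\in\{0,\tfrac12\}$ (mod 1) for some $i\in\{1,2,3\}$ belongs to the no-collision region $\mathfrak I$.
   Context: $\mathbb{T}=\mathbb R/\mathbb Z$, $\mathbb{T}^3=\mathbb{R}^3/\mathbb{Z}^3$; $\omega(k)=\omega_0+\sum_{j=1}^3 2(1-\cos(2\pi k^j))$ with fixed $2<\omega_0<3$. Two wave vectors $x,y\in\mathbb{T}^3$ are connected by one collision if $\omega(y)=\omega(x)+\omega(y-x)$, or $\omega(x)=\omega(y)+\omega(x-y)$, or $\omega(x+y)=\omega(x)+\omega(y)$. The no-collision region $\mathfrak I$ is the set of $x\in\mathbb T^3$ such that no $y\in\mathbb T^3$ is connected to $x$ by one collision. *)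

theory Defs
  imports "HOL-Analysis.Analysis"
begin

text \<open>Points of the torus T^3 = R^3/Z^3 are represented by real representatives
  in real^3; all notions below are 1-periodic in every coordinate, so they are
  well defined on the torus.\<close>

definition omega :: "real \<Rightarrow> real^3 \<Rightarrow> real" where
  "omega w0 k = w0 + (\<Sum>j\<in>UNIV. 2 * (1 - cos (2 * pi * k $ j)))"

definition collision_connected :: "real \<Rightarrow> real^3 \<Rightarrow> real^3 \<Rightarrow> bool" where
  "collision_connected w0 x y \<longleftrightarrow>
     omega w0 y = omega w0 x + omega w0 (y - x) \<or>
     omega w0 x = omega w0 y + omega w0 (x - y) \<or>
     omega w0 (x + y) = omega w0 x + omega w0 y"

definition no_collision_region :: "real \<Rightarrow> (real^3) set" where
  "no_collision_region w0 = {x. \<not> (\<exists>y. collision_connected w0 x y)}"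

end

theory Submission
  imports Defs
begin

text \<open>Each collision equation is a resonance \<open>\<omega>(a + b) = \<omega>(a) + \<omega>(b)\<close> in which \<open>y\<close> is one
  of \<open>a\<close>, \<open>b\<close>, \<open>a + b\<close>. Since \<open>\<omega>\<close> is \<open>\<omega>\<^sub>0\<close> plus a sum of one-dimensional terms \<open>e\<close>, a
  resonance forces \<open>\<omega>\<^sub>0 = \<Sum>\<^sub>j (e(a\<^sub>j + b\<^sub>j) - e(a\<^sub>j) - e(b\<^sub>j))\<close>. Each summand is at most 1, and it
  is at most 0 in a coordinate where one of \<open>a\<^sub>j\<close>, \<open>b\<^sub>j\<close>, \<open>a\<^sub>j + b\<^sub>j\<close> is a multiple of 1/2,
  so \<open>\<omega>\<^sub>0 \<le> 2\<close>, contradicting \<open>\<omega>\<^sub>0 > 2\<close>.\<close>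

definition dispersion :: "real \<Rightarrow> real" where
  "dispersion t = 2 * (1 - cos (2 * pi * t))"

definition resonance_defect :: "real \<Rightarrow> real \<Rightarrow> real" where
  "resonance_defect a b = dispersion (a + b) - dispersion a - dispersion b"

definition half_integer :: "real \<Rightarrow> bool" where
  "half_integer t \<longleftrightarrow> (\<exists>k::int. t = of_int k \<or> t = of_int k + 1/2)"

lemma omega_eq_sum_dispersion: "omega w0 k = w0 + (\<Sum>j\<in>UNIV. dispersion (k $ j))"
  by (simp add: omega_def dispersion_def)

lemma resonance_defect_cos_sin:
  "resonance_defect a b =
     2 * sin (2*pi*a) * sin (2*pi*b) - 2 * (1 - cos (2*pi*a)) * (1 - cos (2*pi*b))"
proof -
  have "2*pi*(a + b) = 2*pi*a + 2*pi*b" by (simp add: distrib_left)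
  then show ?thesis
    by (simp add: resonance_defect_def dispersion_def cos_add algebra_simps)
qed

lemma resonance_defect_le_one: "resonance_defect a b \<le> 1"
proof -
  define A B where "A = 2*pi*a" and "B = 2*pi*b"
  have "(cos A + cos B - 1)^2 + (sin A - sin B)^2
          = 1 - (2 * sin A * sin B - 2 * (1 - cos A) * (1 - cos B))"
    using sin_cos_squared_add3[of A] sin_cos_squared_add3[of B] by algebra
  moreover have "0 \<le> (cos A + cos B - 1)^2 + (sin A - sin B)^2" by simp
  ultimately have "2 * sin A * sin B - 2 * (1 - cos A) * (1 - cos B) \<le> 1"
    by (simp add: power2_eq_square algebra_simps)
  then show ?thesis by (simp add: resonance_defect_cos_sin A_def B_def)
qed

lemma half_integer_sin_cos:
  assumes "half_integer t"
  shows "sin (2*pi*t) = 0" and "cos (2*pi*t) = 1 \<or> cos (2*pi*t) = -1"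
proof -
  obtain k :: int where k: "t = of_int k \<or> t = of_int k + 1/2"
    using assms by (auto simp: half_integer_def)
  have k0: "sin (2 * pi * of_int k) = 0" "cos (2 * pi * of_int k) = 1"
    by (metis mult.commute mult.left_commute sin_int_2pin cos_int_2pin)+
  have "2*pi*t = 2 * pi * of_int k \<or> 2*pi*t = 2 * pi * of_int k + pi"
    using k by (auto simp: algebra_simps)
  then show "sin (2*pi*t) = 0" "cos (2*pi*t) = 1 \<or> cos (2*pi*t) = -1"
    using k0 by (auto simp: sin_add cos_add)
qed

lemma resonance_defect_nonpos_right:
  assumes "half_integer b"
  shows "resonance_defect a b \<le> 0"
  using half_integer_sin_cos[OF assms] cos_le_one[of "2*pi*a"]
  by (auto simp: resonance_defect_cos_sin)

lemma resonance_defect_nonpos_sum: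
  assumes "half_integer (a + b)"
  shows "resonance_defect a b \<le> 0"
proof -
  define A C where "A = 2*pi*a" and "C = 2*pi*(a + b)"
  have B: "2*pi*b = C - A" by (simp add: A_def C_def algebra_simps)
  have sC: "sin C = 0" and cC: "cos C = 1 \<or> cos C = -1"
    using half_integer_sin_cos[OF assms] by (simp_all add: C_def)
  have "2 * sin A * sin (C - A) - 2 * (1 - cos A) * (1 - cos (C - A)) \<le> 0"
    using cC
  proof
    assume "cos C = 1"
    then have "2 * sin A * sin (C - A) - 2 * (1 - cos A) * (1 - cos (C - A))
                 = - 2 * ((sin A)\<^sup>2 + (1 - cos A)\<^sup>2)"
      by (simp add: sin_diff cos_diff sC power2_eq_square)
    also have "\<dots> \<le> 0"
      by (intro mult_nonpos_nonneg) simp_all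
    finally show ?thesis .
  next
    assume "cos C = -1"
    then have "sin (C - A) = sin A" "cos (C - A) = - cos A"
      by (simp_all add: sin_diff cos_diff sC)
    then have "2 * sin A * sin (C - A) - 2 * (1 - cos A) * (1 - cos (C - A))
                 = 2 * (cos A * cos A + sin A * sin A - 1)"
      by (simp add: algebra_simps del: sin_cos_squared_add3)
    then show ?thesis
      by simp
  qed
  then show ?thesis by (simp add: resonance_defect_cos_sin B A_def)
qed

lemma resonance_defect_nonpos:
  assumes "half_integer a \<or> half_integer b \<or> half_integer (a + b)"
  shows "resonance_defect a b \<le> 0"
proof -
  have "resonance_defect a b = resonance_defect b a"
    by (simp add: resonance_defect_def add.commute)
  then show ?thesis
    using assms resonance_defect_nonpos_right[of b a] resonance_defect_nonpos_right[of a b]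
      resonance_defect_nonpos_sum[of a b]
    by auto
qed

lemma sum_le_card_minus_one:
  fixes g :: "'n::finite \<Rightarrow> real"
  assumes "\<And>j. g j \<le> 1" and "g i \<le> 0"
  shows "sum g UNIV \<le> real CARD('n) - 1"
proof -
  have "sum g UNIV = g i + sum g (UNIV - {i})"
    by (simp add: sum.remove)
  moreover have "sum g (UNIV - {i}) \<le> of_nat (card (UNIV - {i})) * 1"
    by (rule sum_bounded_above) (use assms in auto)
  moreover have "card (UNIV - {i}) = CARD('n) - 1"
    by (simp add: card_Diff_singleton)
  ultimately show ?thesis
    using assms(2) by (simp add: of_nat_diff)
qed

lemma omega_resonance_eq_sum_defect:
  assumes "omega w0 (a + b) = omega w0 a + omega w0 b"
  shows "w0 = (\<Sum>j\<in>UNIV. resonance_defect (a $ j) (b $ j))"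
  using assms by (simp add: omega_eq_sum_dispersion resonance_defect_def sum_subtractf)

lemma no_resonance_at_half_integer_coordinate:
  assumes "2 < w0"
    and "half_integer (a $ i) \<or> half_integer (b $ i) \<or> half_integer ((a + b) $ i)"
  shows "omega w0 (a + b) \<noteq> omega w0 a + omega w0 b"
proof
  assume "omega w0 (a + b) = omega w0 a + omega w0 b"
  then have "w0 = (\<Sum>j\<in>UNIV. resonance_defect (a $ j) (b $ j))"
    by (rule omega_resonance_eq_sum_defect)
  also have "\<dots> \<le> real CARD(3) - 1"
    using assms(2) by (intro sum_le_card_minus_one resonance_defect_le_one resonance_defect_nonpos) auto
  finally show False
    using assms(1) by simp
qed

theorem mainTheorem9:
  fixes w0 :: real and y :: "real^3"
  assumes "2 < w0" and "w0 < 3"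
    and "\<exists>i. \<exists>k::int. y $ i = of_int k \<or> y $ i = of_int k + 1/2"
  shows "y \<in> no_collision_region w0"
proof -
  obtain i where i: "half_integer (y $ i)"
    using assms(3) by (auto simp: half_integer_def)
  have "\<not> collision_connected w0 y x" for x
  proof -
    have "omega w0 (x + (y - x)) \<noteq> omega w0 x + omega w0 (y - x)"
         "omega w0 (y + (x - y)) \<noteq> omega w0 y + omega w0 (x - y)"
         "omega w0 (y + x) \<noteq> omega w0 y + omega w0 x"
      using i by (intro no_resonance_at_half_integer_coordinate[OF assms(1), where i = i]; simp)+
    then show ?thesis
      by (simp add: collision_connected_def)
  qed
  then show ?thesis
    by (simp add: no_collision_region_def)
qed

end
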